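(* If $E$ is a pseudo effect algebra satisfying (RDP), then its state space $\mathcal S(E)$ is either empty or a nonempty Choquet simplex (with respect to the weak topology).
   Context: Pseudo effect algebra: partial algebra $(E;+,0,1)$ such that for all $a,b,c$: (i) $a+b$ and $(a+b)+c$ exist iff $b+c$ and $a+(b+c)$ exist, and then they are equal; (ii) there is exactly one $d$ and one $e$ with $a+d=e+a=1$; (iii) if $a+b$ exists there are $d,e$ with $a+b=d+a=b+e$; (iv) if $1+a$ or $a+1$ exists then $a=0$. (RDP): whenever $a_1+a_2=b_1+b_2$ there are $d_1,\dots,d_4$ with $d_1+d_2=a_1$, $d_3+d_4=a_2$, $d_1+d_3=b_1$, $d_2+d_4=b_2$. A state is a map $s:E\to[0,\infty)$ with $s(a+b)=s(a)+s(b)$ whenever $a+b$ is defined and $s(1)=1$; $\mathcal S(E)$ is the set of states, a convex subset of $\mathbb R^E$, with the weak topology of pointwise convergence (it is compact Hausdorff). A convex cone $C$ in a real vector space $V$ is strict if $C\cap -C=\{0\}$; it induces the order $x\le_C y$ iff $y-x\in C$; it is a lattice cone if $C$ is a lattice under $\le_C$. A base of $C$ is a convex $K\subseteq C$ such that every nonzero $y\in C$ is uniquely $y=\alpha x$ with $\alpha>0$, $x\in K$. A simplex is a convex set affinely isomorphic to a base of a lattice cone in some real vector space; a Choquet simplex is a compact simplex in a locally convex Hausdorff space. *)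

theory Defs
  imports "HOL-Analysis.Analysis" "HOL-Library.Function_Algebras"
begin

instantiation "fun" :: (type, real_vector) real_vector
begin
definition scaleR_fun :: "real \<Rightarrow> ('a \<Rightarrow> 'b) \<Rightarrow> 'a \<Rightarrow> 'b"
  where "scaleR_fun r f = (\<lambda>x. r *\<^sub>R f x)"
instance
  by standard (auto simp: scaleR_fun_def fun_eq_iff scaleR_add_right scaleR_add_left)
end

text \<open>A pseudo effect algebra on the whole type 'a: partial addition pe
  (None = undefined), zero z and unit u.\<close>

definition pseudo_effect_algebra :: "('a \<Rightarrow> 'a \<Rightarrow> 'a option) \<Rightarrow> 'a \<Rightarrow> 'a \<Rightarrow> bool" where
  "pseudo_effect_algebra pe z u \<longleftrightarrow>
     (\<forall>a b c. Option.bind (pe a b) (\<lambda>ab. pe ab c) = Option.bind (pe b c) (\<lambda>bc. pe a bc)) \<and>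
     (\<forall>a. (\<exists>!d. pe a d = Some u) \<and> (\<exists>!e. pe e a = Some u)) \<and>
     (\<forall>a b x. pe a b = Some x \<longrightarrow> (\<exists>d e. pe d a = Some x \<and> pe b e = Some x)) \<and>
     (\<forall>a. (pe u a \<noteq> None \<or> pe a u \<noteq> None) \<longrightarrow> a = z)"

definition RDP :: "('a \<Rightarrow> 'a \<Rightarrow> 'a option) \<Rightarrow> bool" where
  "RDP pe \<longleftrightarrow>
     (\<forall>a1 a2 b1 b2 x. pe a1 a2 = Some x \<and> pe b1 b2 = Some x \<longrightarrow>
        (\<exists>d1 d2 d3 d4. pe d1 d2 = Some a1 \<and> pe d3 d4 = Some a2 \<and>
                       pe d1 d3 = Some b1 \<and> pe d2 d4 = Some b2))"

definition is_state :: "('a \<Rightarrow> 'a \<Rightarrow> 'a option) \<Rightarrow> 'a \<Rightarrow> ('a \<Rightarrow> real) \<Rightarrow> bool" where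
  "is_state pe u s \<longleftrightarrow>
     (\<forall>a. 0 \<le> s a) \<and> (\<forall>a b x. pe a b = Some x \<longrightarrow> s x = s a + s b) \<and> s u = 1"

definition state_space :: "('a \<Rightarrow> 'a \<Rightarrow> 'a option) \<Rightarrow> 'a \<Rightarrow> ('a \<Rightarrow> real) set" where
  "state_space pe u = {s. is_state pe u s}"

definition cone_le :: "'w::real_vector set \<Rightarrow> 'w \<Rightarrow> 'w \<Rightarrow> bool" where
  "cone_le C x y \<longleftrightarrow> y - x \<in> C"

definition strict_cone :: "'w::real_vector set \<Rightarrow> bool" where
  "strict_cone C \<longleftrightarrow> C \<inter> uminus ` C = {0}"

definition lattice_cone :: "'w::real_vector set \<Rightarrow> bool" where
  "lattice_cone C \<longleftrightarrow> convex_cone C \<and> strict_cone C \<and>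
     (\<forall>x\<in>C. \<forall>y\<in>C.
        (\<exists>s\<in>C. cone_le C x s \<and> cone_le C y s \<and>
               (\<forall>t\<in>C. cone_le C x t \<and> cone_le C y t \<longrightarrow> cone_le C s t)) \<and>
        (\<exists>i\<in>C. cone_le C i x \<and> cone_le C i y \<and>
               (\<forall>t\<in>C. cone_le C t x \<and> cone_le C t y \<longrightarrow> cone_le C t i)))"

definition cone_base :: "'w::real_vector set \<Rightarrow> 'w set \<Rightarrow> bool" where
  "cone_base C K \<longleftrightarrow> convex K \<and> K \<subseteq> C \<and>
     (\<forall>y\<in>C. y \<noteq> 0 \<longrightarrow> (\<exists>!p. 0 < fst p \<and> snd p \<in> K \<and> y = fst p *\<^sub>R snd p))"

definition affine_iso :: "'v::real_vector set \<Rightarrow> 'w::real_vector set \<Rightarrow> ('v \<Rightarrow> 'w) \<Rightarrow> bool" where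
  "affine_iso K K' f \<longleftrightarrow> bij_betw f K K' \<and>
     (\<forall>x\<in>K. \<forall>y\<in>K. \<forall>t\<in>{0..1::real}.
        f (t *\<^sub>R x + (1 - t) *\<^sub>R y) = t *\<^sub>R f x + (1 - t) *\<^sub>R f y)"

definition simplex_in :: "'w::real_vector itself \<Rightarrow> 'v::real_vector set \<Rightarrow> bool" where
  "simplex_in (TYPE('w)) K \<longleftrightarrow> convex K \<and>
     (\<exists>(C::'w set) K' f. lattice_cone C \<and> cone_base C K' \<and> affine_iso K K' f)"

text \<open>Choquet simplex inside the locally convex Hausdorff space of all functions
  'a => real with the product topology (weak topology of pointwise convergence).\<close>
definition choquet_simplex :: "('a \<Rightarrow> real) set \<Rightarrow> bool" where
  "choquet_simplex K \<longleftrightarrow> compact K \<and> simplex_in TYPE(('a \<Rightarrow> real) \<times> real) K"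

end

theory Submission
  imports Defs
begin

(* The positive additive functions form a strict convex cone in R^E, ordered
   pointwise, and the states form a base of it (normalise m by m(1)).  The heart of the
   proof is that this cone is a lattice: the meet of m1 and m2 is the Riesz meet
     (m1 /\ m2)(a) = inf { m1(b) + m2(c) | b + c = a },
   which is always subadditive and is superadditive exactly thanks to (RDP); the join is
   m1 + m2 - (m1 /\ m2).  Compactness holds because the state space is closed in the
   compact cube [0,1]^E. *)

lemma cone_le_linear_image_iff:
  assumes "linear f" "inj f"
  shows "cone_le (f ` C) (f x) (f y) \<longleftrightarrow> cone_le C x y"
  using assms by (simp add: cone_le_def linear_diff[symmetric] inj_image_mem_iff)

lemma strict_cone_linear_image:
  assumes f: "linear f" "inj f" and C: "strict_cone C"
  shows "strict_cone (f ` C)"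
proof -
  have "f ` C \<inter> uminus ` f ` C = f ` (C \<inter> uminus ` C)"
    using f by (auto simp: linear_neg[symmetric] inj_image_mem_iff image_iff inj_eq)
  also have "\<dots> = {0}" using C f(1) by (simp add: strict_cone_def linear_0)
  finally show ?thesis unfolding strict_cone_def .
qed

lemma lattice_cone_linear_image:
  assumes f: "linear f" "inj f" and C: "lattice_cone C"
  shows "lattice_cone (f ` C)"
  using C convex_cone_linear_image[of C f] strict_cone_linear_image[OF f]
  unfolding lattice_cone_def
  by (auto simp: cone_le_linear_image_iff[OF f] f)

lemma cone_base_linear_image:
  assumes f: "linear f" "inj f" and K: "cone_base C K"
  shows "cone_base (f ` C) (f ` K)"
  unfolding cone_base_def
proof (intro conjI ballI impI)
  show "convex (f ` K)" using K f(1) by (simp add: cone_base_def convex_linear_image)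
  show "f ` K \<subseteq> f ` C" using K by (auto simp: cone_base_def)
  fix y assume "y \<in> f ` C" "y \<noteq> 0"
  then obtain c where c: "c \<in> C" "c \<noteq> 0" and y: "y = f c"
    using f(1) linear_0 by blast
  obtain \<alpha> k where ak: "0 < \<alpha>" "k \<in> K" "c = \<alpha> *\<^sub>R k" and
    uniq: "\<And>\<beta> k'. 0 < \<beta> \<Longrightarrow> k' \<in> K \<Longrightarrow> c = \<beta> *\<^sub>R k' \<Longrightarrow> \<beta> = \<alpha> \<and> k' = k"
    using K c unfolding cone_base_def by (metis fst_conv snd_conv)
  have scale: "\<beta> *\<^sub>R f k' = f (\<beta> *\<^sub>R k')" for \<beta> k' using f(1) by (simp add: linear_scale)
  show "\<exists>!p. 0 < fst p \<and> snd p \<in> f ` K \<and> y = fst p *\<^sub>R snd p"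
  proof (rule ex1I[of _ "(\<alpha>, f k)"])
    show "0 < fst (\<alpha>, f k) \<and> snd (\<alpha>, f k) \<in> f ` K \<and> y = fst (\<alpha>, f k) *\<^sub>R snd (\<alpha>, f k)"
      using ak y scale by simp
    fix p assume "0 < fst p \<and> snd p \<in> f ` K \<and> y = fst p *\<^sub>R snd p"
    then obtain k' where "0 < fst p" "k' \<in> K" "snd p = f k'" "c = fst p *\<^sub>R k'"
      using y scale f(2) by (metis image_iff injD)
    then show "p = (\<alpha>, f k)" using uniq by (metis prod.collapse)
  qed
qed

lemma affine_iso_compose_linear:
  assumes "affine_iso K K' g" "linear f" "inj f"
  shows "affine_iso K (f ` K') (f \<circ> g)"
  using assms unfolding affine_iso_def
  by (auto simp: bij_betw_trans inj_on_subset[of f UNIV] bij_betw_imageI linear_add linear_scale)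

lemma simplex_in_linear_embedding:
  fixes f :: "'v::real_vector \<Rightarrow> 'w::real_vector"
  assumes "simplex_in TYPE('v) K" "linear f" "inj f"
  shows "simplex_in TYPE('w) K"
  using assms unfolding simplex_in_def
  by (meson lattice_cone_linear_image cone_base_linear_image affine_iso_compose_linear)

definition positive_additive :: "('a \<Rightarrow> 'a \<Rightarrow> 'a option) \<Rightarrow> ('a \<Rightarrow> real) \<Rightarrow> bool" where
  "positive_additive pe m \<longleftrightarrow>
     (\<forall>a. 0 \<le> m a) \<and> (\<forall>a b x. pe a b = Some x \<longrightarrow> m x = m a + m b)"

definition additive_cone :: "('a \<Rightarrow> 'a \<Rightarrow> 'a option) \<Rightarrow> ('a \<Rightarrow> real) set" where
  "additive_cone pe = {m. positive_additive pe m}"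

lemma mem_additive_cone [simp]: "m \<in> additive_cone pe \<longleftrightarrow> positive_additive pe m"
  by (simp add: additive_cone_def)

lemma positive_additiveD:
  assumes "positive_additive pe m"
  shows positive_additive_nonneg: "0 \<le> m a"
    and positive_additive_sum: "pe a b = Some x \<Longrightarrow> m x = m a + m b"
  using assms unfolding positive_additive_def by auto

lemma positive_additive_add:
  "positive_additive pe m \<Longrightarrow> positive_additive pe n \<Longrightarrow> positive_additive pe (m + n)"
  unfolding positive_additive_def by auto

lemma positive_additive_diff:
  "positive_additive pe m \<Longrightarrow> positive_additive pe n \<Longrightarrow> n \<le> m \<Longrightarrow> positive_additive pe (m - n)"
  unfolding positive_additive_def by (auto simp: le_fun_def)

lemma cone_le_additive_cone:
  assumes "positive_additive pe m" "positive_additive pe n"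
  shows "cone_le (additive_cone pe) m n \<longleftrightarrow> m \<le> n"
  using assms unfolding cone_le_def additive_cone_def positive_additive_def
  by (auto simp: le_fun_def)

lemma convex_cone_additive_cone: "convex_cone (additive_cone pe)"
  unfolding convex_cone_iff additive_cone_def positive_additive_def
  by (auto simp: scaleR_fun_def distrib_left)

lemma strict_cone_additive_cone: "strict_cone (additive_cone pe)"
proof -
  have "m = 0" if "m \<in> additive_cone pe" "- m \<in> additive_cone pe" for m
    using that unfolding mem_additive_cone positive_additive_def
    by (auto simp: fun_eq_iff intro: antisym)
  moreover have "0 \<in> additive_cone pe"
    by (rule convex_cone_contains_0[OF convex_cone_additive_cone])
  ultimately show ?thesis
    unfolding strict_cone_def by (auto intro: image_eqI[of _ _ 0])
qed

lemma is_state_iff: "is_state pe u s \<longleftrightarrow> positive_additive pe s \<and> s u = 1"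
  unfolding is_state_def positive_additive_def by auto

lemma convex_state_space: "convex (state_space pe u)"
  unfolding convex_def state_space_def is_state_iff positive_additive_def
  by (auto simp: scaleR_fun_def algebra_simps)

definition riesz_meet ::
    "('a \<Rightarrow> 'a \<Rightarrow> 'a option) \<Rightarrow> ('a \<Rightarrow> real) \<Rightarrow> ('a \<Rightarrow> real) \<Rightarrow> 'a \<Rightarrow> real" where
  "riesz_meet pe m1 m2 a = Inf {m1 b + m2 c | b c. pe b c = Some a}"

locale pseudo_EA =
  fixes pe :: "'a \<Rightarrow> 'a \<Rightarrow> 'a option" and z u :: 'a
  assumes pea: "pseudo_effect_algebra pe z u"
begin

lemma assoc: "Option.bind (pe a b) (\<lambda>ab. pe ab c) = Option.bind (pe b c) (\<lambda>bc. pe a bc)"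
  and complements: "\<exists>!d. pe a d = Some u" "\<exists>!e. pe e a = Some u"
  and conjugates: "pe a b = Some x \<Longrightarrow> \<exists>d e. pe d a = Some x \<and> pe b e = Some x"
  and unit_summand: "pe u a \<noteq> None \<or> pe a u \<noteq> None \<Longrightarrow> a = z"
  using pea unfolding pseudo_effect_algebra_def by blast+

lemma assoc_left:
  assumes "pe a b = Some y" "pe y c = Some x"
  obtains w where "pe b c = Some w" "pe a w = Some x"
  using assoc[of a b c] assms by (cases "pe b c") auto

lemma assoc_right:
  assumes "pe b c = Some w" "pe a w = Some x"
  obtains y where "pe a b = Some y" "pe y c = Some x"
  using assoc[of a b c] assms by (cases "pe a b") auto

text \<open>The zero is neutral on both sides; this is derived from the uniqueness of complements.\<close>

lemma zero_right: "pe a z = Some a"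
proof -
  obtain d where "pe u d = Some u" using complements by blast
  then have uz: "pe u z = Some u" using unit_summand[of d] by auto
  obtain e where e: "pe e a = Some u" using complements by blast
  obtain y where "pe a z = Some y" "pe e y = Some u" using assoc_left[OF e uz] .
  moreover from this have "y = a" using complements(1)[of e] e by blast
  ultimately show ?thesis by simp
qed

lemma zero_left: "pe z a = Some a"
proof -
  obtain d where "pe d u = Some u" using complements by blast
  then have zu: "pe z u = Some u" using unit_summand[of d] by auto
  obtain e where e: "pe a e = Some u" using complements by blast
  obtain y where "pe z a = Some y" "pe y e = Some u" using assoc_right[OF e zu] .
  moreover from this have "y = a" using complements(2)[of e] e by blast
  ultimately show ?thesis by simp
qed

lemma positive_additive_zero: "positive_additive pe m \<Longrightarrow> m z = 0"
  using positive_additive_sum[of pe m u z u] zero_right[of u] by simp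

text \<open>Every element is a summand of the unit, so a positive additive function is bounded
  by its value at the unit.\<close>

lemma positive_additive_le_unit: "positive_additive pe m \<Longrightarrow> m a \<le> m u"
  using complements(1)[of a] positive_additiveD[of pe m] by (metis le_add_same_cancel1)

lemma riesz_meet_le:
  assumes "positive_additive pe m1" "positive_additive pe m2" "pe b c = Some a"
  shows "riesz_meet pe m1 m2 a \<le> m1 b + m2 c"
  unfolding riesz_meet_def
proof (rule cInf_lower)
  show "bdd_below {m1 b + m2 c |b c. pe b c = Some a}"
    using assms(1,2) by (intro bdd_belowI[of _ 0]) (auto simp: positive_additive_nonneg)
qed (use assms(3) in blast)

lemma riesz_meet_greatest:
  "(\<And>b c. pe b c = Some a \<Longrightarrow> t \<le> m1 b + m2 c) \<Longrightarrow> t \<le> riesz_meet pe m1 m2 a"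
  unfolding riesz_meet_def by (rule cInf_greatest) (use zero_right in blast)+

lemma riesz_meet_nonneg:
  "positive_additive pe m1 \<Longrightarrow> positive_additive pe m2 \<Longrightarrow> 0 \<le> riesz_meet pe m1 m2 a"
  by (rule riesz_meet_greatest) (simp add: positive_additive_nonneg)

lemma riesz_meet_lower:
  assumes "positive_additive pe m1" "positive_additive pe m2"
  shows "riesz_meet pe m1 m2 \<le> m1" "riesz_meet pe m1 m2 \<le> m2"
  using riesz_meet_le[OF assms zero_right] riesz_meet_le[OF assms zero_left]
    positive_additive_zero[OF assms(1)] positive_additive_zero[OF assms(2)]
  by (auto simp: le_fun_def)

lemma riesz_meet_glb:
  assumes "positive_additive pe t" "t \<le> m1" "t \<le> m2"
  shows "t \<le> riesz_meet pe m1 m2"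
proof -
  have "t a \<le> m1 b + m2 c" if "pe b c = Some a" for a b c
    using positive_additive_sum[OF assms(1) that] assms(2,3) by (auto simp: le_fun_def add_mono)
  then show ?thesis by (auto simp: le_fun_def intro: riesz_meet_greatest)
qed

text \<open>The candidate join m1 + m2 - riesz_meet pe m1 m2 lies below every common positive
  additive upper bound t: for a = b + c one has m1 c \<le> t c and m2 b \<le> t b.\<close>

lemma riesz_join_lub:
  assumes m: "positive_additive pe m1" "positive_additive pe m2"
    and t: "positive_additive pe t" "m1 \<le> t" "m2 \<le> t"
  shows "m1 + m2 - riesz_meet pe m1 m2 \<le> t"
proof -
  have "m1 a + m2 a - t a \<le> m1 b + m2 c" if "pe b c = Some a" for a b c
    using positive_additive_sum[OF m(1) that] positive_additive_sum[OF m(2) that]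
      positive_additive_sum[OF t(1) that] t(2,3)[unfolded le_fun_def]
    by (smt (verit))
  then have "m1 a + m2 a - t a \<le> riesz_meet pe m1 m2 a" for a by (rule riesz_meet_greatest)
  then show ?thesis by (simp add: le_fun_def algebra_simps)
qed

text \<open>Interchange of summands: in a sum (a1 + a2) + (b1 + b2) the summand b1 can be moved
  in front of a2 at the price of replacing it by a conjugate d, where d + a2 = a2 + b1.\<close>

lemma interchange_summands:
  assumes ha: "pe a1 a2 = Some a" and hb: "pe b1 b2 = Some b" and x: "pe a b = Some x"
  obtains d v p q where "pe d a2 = Some v" "pe a2 b1 = Some v"
    "pe a1 d = Some p" "pe a2 b2 = Some q" "pe p q = Some x"
proof -
  obtain w where w1: "pe a2 b = Some w" and w2: "pe a1 w = Some x" using assoc_left[OF ha x] .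
  obtain v where v1: "pe a2 b1 = Some v" and v2: "pe v b2 = Some w" using assoc_right[OF hb w1] .
  obtain d where d: "pe d a2 = Some v" using conjugates[OF v1] by blast
  obtain q where q1: "pe a2 b2 = Some q" and q2: "pe d q = Some w" using assoc_left[OF d v2] .
  obtain p where p1: "pe a1 d = Some p" and p2: "pe p q = Some x" using assoc_right[OF q2 w2] .
  show thesis using that[OF d v1 p1 q1 p2] .
qed

lemma riesz_meet_subadditive:
  assumes m1: "positive_additive pe m1" and m2: "positive_additive pe m2" and x: "pe a b = Some x"
  shows "riesz_meet pe m1 m2 x \<le> riesz_meet pe m1 m2 a + riesz_meet pe m1 m2 b"
proof -
  let ?m = "riesz_meet pe m1 m2"
  have split: "?m x \<le> (m1 a1 + m2 a2) + (m1 b1 + m2 b2)"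
    if ha: "pe a1 a2 = Some a" and hb: "pe b1 b2 = Some b" for a1 a2 b1 b2
  proof -
    obtain d v p q where d: "pe d a2 = Some v" "pe a2 b1 = Some v"
      and pq: "pe a1 d = Some p" "pe a2 b2 = Some q" "pe p q = Some x"
      using interchange_summands[OF ha hb x] .
    have "m1 d = m1 b1" using positive_additive_sum[OF m1 d(1)] positive_additive_sum[OF m1 d(2)] by simp
    then show ?thesis
      using riesz_meet_le[OF m1 m2 pq(3)] positive_additive_sum[OF m1 pq(1)]
        positive_additive_sum[OF m2 pq(2)] by simp
  qed
  have "?m x - (m1 b1 + m2 b2) \<le> ?m a" if "pe b1 b2 = Some b" for b1 b2
    by (rule riesz_meet_greatest) (use split[OF _ that] in force)
  then have "?m x - ?m a \<le> ?m b"
    by (intro riesz_meet_greatest) force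
  then show ?thesis by simp
qed

text \<open>Every nonzero element m of the cone is uniquely (m u) times a state, so the state
  space is a base of the cone.\<close>

lemma cone_base_state_space: "cone_base (additive_cone pe) (state_space pe u)"
  unfolding cone_base_def
proof (intro conjI ballI impI convex_state_space)
  show "state_space pe u \<subseteq> additive_cone pe"
    by (auto simp: state_space_def is_state_iff)
  fix m assume "m \<in> additive_cone pe" "m \<noteq> 0"
  then have m: "positive_additive pe m" and "m \<noteq> 0" by simp_all
  have mu: "0 < m u"
  proof (rule ccontr)
    assume "\<not> 0 < m u"
    then have "m a = 0" for a
      using positive_additive_le_unit[OF m, of a] positive_additive_nonneg[OF m, of a] by simp
    with \<open>m \<noteq> 0\<close> show False by auto
  qed
  define s where "s = inverse (m u) *\<^sub>R m"
  have s: "s \<in> state_space pe u"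
    unfolding state_space_def is_state_iff s_def using m mu
    by (auto simp: positive_additive_def scaleR_fun_def algebra_simps)
  have uniq: "\<alpha> = m u \<and> s' = s" if "0 < \<alpha>" "s' \<in> state_space pe u" "m = \<alpha> *\<^sub>R s'" for \<alpha> s'
  proof -
    have "m u = \<alpha>" using that by (simp add: state_space_def is_state_iff scaleR_fun_def)
    then show ?thesis using that by (simp add: s_def)
  qed
  show "\<exists>!p. 0 < fst p \<and> snd p \<in> state_space pe u \<and> m = fst p *\<^sub>R snd p"
    using mu s uniq by (intro ex1I[of _ "(m u, s)"]) (auto simp: s_def)
qed

text \<open>The state space is a closed subset of the compact cube [0,1]^E in the product topology.\<close>

lemma compact_state_space: "compact (state_space pe u)"
proof -
  have sub: "state_space pe u \<subseteq> PiE UNIV (\<lambda>_. {0..1::real})"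
    by (auto simp: state_space_def is_state_iff positive_additive_nonneg)
      (metis positive_additive_le_unit)
  have cube: "compact (PiE UNIV (\<lambda>_. {0..1::real}))"
    using compactin_PiE[of "\<lambda>_. euclidean" UNIV "\<lambda>_. {0..1::real}"]
    by (simp add: euclidean_product_topology)
  have eq: "state_space pe u = (\<Inter>a. {s. 0 \<le> s a}) \<inter>
     (\<Inter>(a, b, x)\<in>{(a, b, x). pe a b = Some x}. {s. s x = s a + s b}) \<inter> {s. s u = 1}"
    by (auto simp: state_space_def is_state_def)
  have additivity_closed: "closed {s::'a \<Rightarrow> real. s x = s a + s b}" for a b x
    by (intro closed_Collect_eq continuous_intros continuous_on_product_coordinates)
  have "closed (state_space pe u)"
    unfolding eq
    by (intro closed_Int closed_INT ballI closed_Collect_le closed_Collect_eq continuous_intros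
        continuous_on_product_coordinates) (auto simp: additivity_closed)
  then show ?thesis using cube sub by (metis compact_Int_closed inf.absorb_iff2)
qed

end

text \<open>Under the Riesz decomposition property the Riesz meet is additive, hence again a
  positive additive function; this is where (RDP) enters.\<close>

locale pseudo_EA_RDP = pseudo_EA +
  assumes rdp: "RDP pe"
begin

lemma riesz_meet_superadditive:
  assumes m1: "positive_additive pe m1" and m2: "positive_additive pe m2" and x: "pe a b = Some x"
  shows "riesz_meet pe m1 m2 a + riesz_meet pe m1 m2 b \<le> riesz_meet pe m1 m2 x"
proof (rule riesz_meet_greatest)
  fix p q assume pq: "pe p q = Some x"
  obtain d1 d2 d3 d4 where d: "pe d1 d2 = Some p" "pe d3 d4 = Some q"
    "pe d1 d3 = Some a" "pe d2 d4 = Some b"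
    using rdp pq x unfolding RDP_def by blast
  show "riesz_meet pe m1 m2 a + riesz_meet pe m1 m2 b \<le> m1 p + m2 q"
    using riesz_meet_le[OF m1 m2 d(3)] riesz_meet_le[OF m1 m2 d(4)]
      positive_additive_sum[OF m1 d(1)] positive_additive_sum[OF m2 d(2)] by simp
qed

lemma positive_additive_riesz_meet:
  assumes "positive_additive pe m1" "positive_additive pe m2"
  shows "positive_additive pe (riesz_meet pe m1 m2)"
  unfolding positive_additive_def
  using assms riesz_meet_nonneg riesz_meet_subadditive riesz_meet_superadditive
  by (auto intro: antisym)

lemma lattice_cone_additive_cone: "lattice_cone (additive_cone pe)"
  unfolding lattice_cone_def
proof (intro conjI ballI convex_cone_additive_cone strict_cone_additive_cone)
  fix m1 m2 assume "m1 \<in> additive_cone pe" "m2 \<in> additive_cone pe"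
  then have m: "positive_additive pe m1" "positive_additive pe m2"
    by simp_all
  define i where "i = riesz_meet pe m1 m2"
  have i: "positive_additive pe i" "i \<le> m1" "i \<le> m2"
    using positive_additive_riesz_meet[OF m] riesz_meet_lower[OF m] by (simp_all add: i_def)
  have j: "positive_additive pe (m1 + m2 - i)"
    using positive_additive_add[OF m(2) positive_additive_diff[OF m(1) i(1,2)]]
    by (simp add: algebra_simps)
  have j_upper: "m1 \<le> m1 + m2 - i" "m2 \<le> m1 + m2 - i"
    using i(2,3) by (auto simp: le_fun_def)
  show "\<exists>s\<in>additive_cone pe. cone_le (additive_cone pe) m1 s \<and> cone_le (additive_cone pe) m2 s \<and>
    (\<forall>t\<in>additive_cone pe. cone_le (additive_cone pe) m1 t \<and> cone_le (additive_cone pe) m2 t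
       \<longrightarrow> cone_le (additive_cone pe) s t)"
    using m j j_upper riesz_join_lub[OF m, folded i_def]
    by (intro bexI[of _ "m1 + m2 - i"]) (auto simp: cone_le_additive_cone)
  show "\<exists>s\<in>additive_cone pe. cone_le (additive_cone pe) s m1 \<and> cone_le (additive_cone pe) s m2 \<and>
    (\<forall>t\<in>additive_cone pe. cone_le (additive_cone pe) t m1 \<and> cone_le (additive_cone pe) t m2
       \<longrightarrow> cone_le (additive_cone pe) t s)"
    using m i riesz_meet_glb[of _ m1 m2, folded i_def]
    by (intro bexI[of _ i]) (auto simp: cone_le_additive_cone)
qed

lemma simplex_in_state_space: "simplex_in TYPE('a \<Rightarrow> real) (state_space pe u)"
  unfolding simplex_in_def
proof (intro conjI convex_state_space exI)
  show "affine_iso (state_space pe u) (state_space pe u) id"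
    by (simp add: affine_iso_def)
qed (fact lattice_cone_additive_cone cone_base_state_space)+

end

text \<open>The main theorem: the state space is compact, and it is a simplex in (E -> R) x R
  via the embedding m |-> (m, 0).\<close>

theorem theorem5p1:
  fixes pe :: "'a \<Rightarrow> 'a \<Rightarrow> 'a option" and z u :: 'a
  assumes "pseudo_effect_algebra pe z u"
    and "RDP pe"
  shows "state_space pe u = {} \<or>
         (state_space pe u \<noteq> {} \<and> choquet_simplex (state_space pe u))"
proof -
  interpret pseudo_EA_RDP pe z u by unfold_locales (fact assms)+
  have embedding: "linear (\<lambda>m::'a \<Rightarrow> real. (m, 0::real))" "inj (\<lambda>m::'a \<Rightarrow> real. (m, 0::real))"
    by (auto simp: linear_iff inj_on_def)
  have "choquet_simplex (state_space pe u)"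
    unfolding choquet_simplex_def
    using compact_state_space simplex_in_linear_embedding[OF simplex_in_state_space embedding]
    by blast
  then show ?thesis by blast
qed

end
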